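(* Let $f\colon(\mathbb R^d)^n\to\mathbb R^d$ be measurable and $(C_{\mathsf{MSE}},\frac dn)$-uniformly MSE-accurate for $\{\mathcal N(\mu,\mathbb I_d)\}_{\mu\in\mathbb R^d}$, and fix $\rho>0$. Then there exist $u\in\mathbb S^{d-1}$ and $\lambda_*\in u^\perp$ such that the scalar estimator $g_{\lambda_*}$ satisfies \[\mathbb E_{\mu'\sim\mathcal N(0,\rho^2)}\mathbb E_{T\sim\mathcal N(\mu',1)^{\otimes n}}[(g_{\lambda_*}(T)-\mu')^2]\le\frac{C_{\mathsf{MSE}}}{n}.\]
   Context: $f$ is $(C_{\mathsf{MSE}},\frac dn)$-uniformly MSE-accurate if $\sup_{\mu\in\mathbb R^d}\mathbb E_{X\sim\mathcal N(\mu,\mathbb I_d)^{\otimes n}}\|f(X)-\mu\|_2^2\le C_{\mathsf{MSE}}\frac dn$. For $u\in\mathbb S^{d-1}$ and $\lambda\in u^\perp$, with $Z_1,\dots,Z_n$ i.i.d. $\mathcal N(0,\mathbb I_d)$ and $V_i=\lambda+(\mathbb I_d-uu^\top)Z_i$, the scalar estimator is $g_\lambda(t)=\mathbb E_Z[\langle u,f(t_1u+V_1,\dots,t_nu+V_n)\rangle]$ for $t\in\mathbb R^n$ (defined wherever this expectation exists). *)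

theory Defs
  imports "HOL-Probability.Probability"
begin

definition gauss_density :: "'a::euclidean_space \<Rightarrow> 'a \<Rightarrow> real" where
  "gauss_density \<mu> x = (2 * pi) powr (- real DIM('a) / 2) * exp (- (norm (x - \<mu>))\<^sup>2 / 2)"

definition gauss :: "'a::euclidean_space \<Rightarrow> 'a measure" where
  "gauss \<mu> = density lborel (\<lambda>x. ennreal (gauss_density \<mu> x))"

definition samples :: "nat \<Rightarrow> 'a measure \<Rightarrow> (nat \<Rightarrow> 'a) measure" where
  "samples n M = PiM {..<n} (\<lambda>_. M)"

definition unif_MSE_accurate :: "((nat \<Rightarrow> 'a::euclidean_space) \<Rightarrow> 'a) \<Rightarrow> nat \<Rightarrow> real \<Rightarrow> bool" where
  "unif_MSE_accurate f n C \<longleftrightarrow>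
     (SUP \<mu>. \<integral>\<^sup>+ X. ennreal ((norm (f X - \<mu>))\<^sup>2) \<partial>samples n (gauss \<mu>))
       \<le> ennreal (C * real DIM('a) / real n)"

text \<open>The integrand defining the scalar estimator g_lambda(t), Z_i i.i.d. N(0,I_d),
  V_i = lambda + (I - u u^T) Z_i.\<close>
definition g_integrand :: "((nat \<Rightarrow> 'a::euclidean_space) \<Rightarrow> 'a) \<Rightarrow> nat \<Rightarrow> 'a \<Rightarrow> 'a
    \<Rightarrow> (nat \<Rightarrow> real) \<Rightarrow> (nat \<Rightarrow> 'a) \<Rightarrow> real" where
  "g_integrand f n u lam t Z =
     inner u (f (\<lambda>i\<in>{..<n}. t i *\<^sub>R u + (lam + (Z i - (inner u (Z i)) *\<^sub>R u))))"

definition g_est :: "((nat \<Rightarrow> 'a::euclidean_space) \<Rightarrow> 'a) \<Rightarrow> nat \<Rightarrow> 'a \<Rightarrow> 'a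
    \<Rightarrow> (nat \<Rightarrow> real) \<Rightarrow> real" where
  "g_est f n u lam t = (\<integral> Z. g_integrand f n u lam t Z \<partial>samples n (gauss 0))"

end

(* Put the prior N(0, rho^2 I) on mu, with i.i.d. coordinates in the standard
   basis.  Integrating the uniform MSE bound against it bounds the sum over the basis
   directions b of the Bayes risks of the scalar estimators <b, f> by C d / n, so some basis
   direction u has Bayes risk at most C / n.  Averaging over the remaining coordinates of the
   prior (Fubini) fixes them at some lam orthogonal to u without losing the bound.
   For mu = mu' u + lam the samples T_i u + V_i of the estimator g_lam with T_i ~ N(mu', 1) are
   again N(mu, I): replacing the u-component of a standard Gaussian by an independent standard
   normal does not change its law.  So E_T E_Z (<u, f(T u + V)> - mu')^2 is exactly that Bayes
   risk, and Jensen's inequality in Z passes the bound to g_lam = E_Z <u, f(T u + V)>; finiteness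
   of the risk also gives integrability of the integrand for almost all T. *)

theory Submission
  imports Defs
begin

section \<open>Product measures and i.i.d. samples\<close>

lemma nn_integral_PiM_density:
  fixes \<phi> :: "'b \<Rightarrow> ennreal"
  assumes sf_M: "sigma_finite_measure M" and sf_D: "sigma_finite_measure (density M \<phi>)"
    and [measurable]: "\<phi> \<in> borel_measurable M"
    and "finite I" and "F \<in> borel_measurable (PiM I (\<lambda>_. M))"
  shows "(\<integral>\<^sup>+x. F x \<partial>PiM I (\<lambda>_. density M \<phi>)) = (\<integral>\<^sup>+x. (\<Prod>i\<in>I. \<phi> (x i)) * F x \<partial>PiM I (\<lambda>_. M))"
proof -
  interpret M: product_sigma_finite "\<lambda>_. M"
    unfolding product_sigma_finite_def using sf_M by simp
  interpret D: product_sigma_finite "\<lambda>_. density M \<phi>"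
    unfolding product_sigma_finite_def using sf_D by simp
  show ?thesis
    using assms(4,5)
  proof (induction I arbitrary: F rule: finite_induct)
    case empty
    show ?case by (simp add: M.nn_integral_empty D.nn_integral_empty)
  next
    case (insert i I)
    have [measurable]: "F \<in> borel_measurable (PiM (insert i I) (\<lambda>_. M))" by fact
    have "(\<integral>\<^sup>+x. F x \<partial>PiM (insert i I) (\<lambda>_. density M \<phi>))
        = (\<integral>\<^sup>+x. (\<integral>\<^sup>+y. \<phi> y * F (x(i := y)) \<partial>M) \<partial>PiM I (\<lambda>_. density M \<phi>))"
      using insert(1,2)
      by (subst D.product_nn_integral_insert)
         (auto simp: nn_integral_density space_PiM intro!: nn_integral_cong)
    also have "\<dots> = (\<integral>\<^sup>+x. (\<Prod>j\<in>I. \<phi> (x j)) * (\<integral>\<^sup>+y. \<phi> y * F (x(i := y)) \<partial>M) \<partial>PiM I (\<lambda>_. M))"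
      by (rule insert.IH) measurable
    also have "\<dots> = (\<integral>\<^sup>+x. (\<integral>\<^sup>+y. (\<Prod>j\<in>insert i I. \<phi> ((x(i := y)) j)) * F (x(i := y)) \<partial>M) \<partial>PiM I (\<lambda>_. M))"
    proof (intro nn_integral_cong)
      fix x assume x: "x \<in> space (PiM I (\<lambda>_. M))"
      have [measurable]: "(\<lambda>y. x(i := y)) \<in> M \<rightarrow>\<^sub>M PiM (insert i I) (\<lambda>_. M)"
        using measurable_compose[OF measurable_Pair1'[OF x] measurable_add_dim] by simp
      have "(\<Prod>j\<in>I. \<phi> ((x(i := y)) j)) = (\<Prod>j\<in>I. \<phi> (x j))" for y
        using insert(2) by (intro prod.cong) auto
      then have "(\<Prod>j\<in>insert i I. \<phi> ((x(i := y)) j)) = \<phi> y * (\<Prod>j\<in>I. \<phi> (x j))" for y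
        using insert(1,2) by simp
      then show "(\<Prod>j\<in>I. \<phi> (x j)) * (\<integral>\<^sup>+y. \<phi> y * F (x(i := y)) \<partial>M)
          = (\<integral>\<^sup>+y. (\<Prod>j\<in>insert i I. \<phi> ((x(i := y)) j)) * F (x(i := y)) \<partial>M)"
        by (subst nn_integral_cmult[symmetric]) (measurable, simp add: ac_simps)
    qed
    also have "\<dots> = (\<integral>\<^sup>+x. (\<Prod>j\<in>insert i I. \<phi> (x j)) * F x \<partial>PiM (insert i I) (\<lambda>_. M))"
      by (rule M.product_nn_integral_insert[symmetric, OF insert(1,2)]) measurable
    finally show ?case .
  qed
qed

lemma PiM_density:
  fixes \<phi> :: "'b \<Rightarrow> ennreal"
  assumes "sigma_finite_measure M" and "sigma_finite_measure (density M \<phi>)"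
    and [measurable]: "\<phi> \<in> borel_measurable M" and "finite I"
  shows "PiM I (\<lambda>_. density M \<phi>) = density (PiM I (\<lambda>_. M)) (\<lambda>x. \<Prod>i\<in>I. \<phi> (x i))"
proof (rule measure_eqI)
  have sets_eq: "sets (PiM I (\<lambda>_. density M \<phi>)) = sets (PiM I (\<lambda>_. M))"
    by (intro sets_PiM_cong) simp_all
  then show "sets (PiM I (\<lambda>_. density M \<phi>)) = sets (density (PiM I (\<lambda>_. M)) (\<lambda>x. \<Prod>i\<in>I. \<phi> (x i)))"
    by simp
  fix A assume "A \<in> sets (PiM I (\<lambda>_. density M \<phi>))"
  then have A: "A \<in> sets (PiM I (\<lambda>_. M))" "A \<in> sets (PiM I (\<lambda>_. density M \<phi>))"
    using sets_eq by auto
  have "emeasure (PiM I (\<lambda>_. density M \<phi>)) A = (\<integral>\<^sup>+x. indicator A x \<partial>PiM I (\<lambda>_. density M \<phi>))"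
    using A by simp
  also have "\<dots> = (\<integral>\<^sup>+x. (\<Prod>i\<in>I. \<phi> (x i)) * indicator A x \<partial>PiM I (\<lambda>_. M))"
    using A by (intro nn_integral_PiM_density assms) simp
  also have "\<dots> = emeasure (density (PiM I (\<lambda>_. M)) (\<lambda>x. \<Prod>i\<in>I. \<phi> (x i))) A"
    using A by (simp add: emeasure_density)
  finally show "emeasure (PiM I (\<lambda>_. density M \<phi>)) A = emeasure (density (PiM I (\<lambda>_. M)) (\<lambda>x. \<Prod>i\<in>I. \<phi> (x i))) A" .
qed

lemma nn_integral_PiM_insert_pair:
  assumes sf: "sigma_finite_measure M" "sigma_finite_measure N" and I: "finite I" "i \<notin> I"
    and [measurable]: "(\<lambda>(X, Y). G X Y) \<in> borel_measurable (PiM (insert i I) (\<lambda>_. M) \<Otimes>\<^sub>M PiM (insert i I) (\<lambda>_. N))"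
  shows "(\<integral>\<^sup>+X. (\<integral>\<^sup>+Y. G X Y \<partial>PiM (insert i I) (\<lambda>_. N)) \<partial>PiM (insert i I) (\<lambda>_. M))
    = (\<integral>\<^sup>+X. (\<integral>\<^sup>+Y. (\<integral>\<^sup>+x. (\<integral>\<^sup>+y. G (X(i := x)) (Y(i := y)) \<partial>N) \<partial>M) \<partial>PiM I (\<lambda>_. N))
        \<partial>PiM I (\<lambda>_. M))"
proof -
  interpret PM: product_sigma_finite "\<lambda>_. M"
    unfolding product_sigma_finite_def using sf by simp
  interpret PN: product_sigma_finite "\<lambda>_. N"
    unfolding product_sigma_finite_def using sf by simp
  interpret PNI: sigma_finite_measure "PiM I (\<lambda>_. N)"
    using I(1) by (rule PN.sigma_finite)
  interpret PNI': sigma_finite_measure "PiM (insert i I) (\<lambda>_. N)"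
    using I(1) by (intro PN.sigma_finite) simp
  interpret pair_sigma_finite "PiM I (\<lambda>_. N)" M
    unfolding pair_sigma_finite_def using PNI.sigma_finite_measure_axioms sf(1) by simp
  have "(\<integral>\<^sup>+X. (\<integral>\<^sup>+Y. G X Y \<partial>PiM (insert i I) (\<lambda>_. N)) \<partial>PiM (insert i I) (\<lambda>_. M))
      = (\<integral>\<^sup>+X. (\<integral>\<^sup>+x. (\<integral>\<^sup>+Y. G (X(i := x)) Y \<partial>PiM (insert i I) (\<lambda>_. N)) \<partial>M) \<partial>PiM I (\<lambda>_. M))"
    by (rule PM.product_nn_integral_insert[OF I]) measurable
  also have "\<dots> = (\<integral>\<^sup>+X. (\<integral>\<^sup>+x. (\<integral>\<^sup>+Y. (\<integral>\<^sup>+y. G (X(i := x)) (Y(i := y)) \<partial>N) \<partial>PiM I (\<lambda>_. N)) \<partial>M)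
      \<partial>PiM I (\<lambda>_. M))"
    by (intro nn_integral_cong PN.product_nn_integral_insert[OF I]) measurable
  also have "\<dots> = (\<integral>\<^sup>+X. (\<integral>\<^sup>+Y. (\<integral>\<^sup>+x. (\<integral>\<^sup>+y. G (X(i := x)) (Y(i := y)) \<partial>N) \<partial>M) \<partial>PiM I (\<lambda>_. N))
      \<partial>PiM I (\<lambda>_. M))"
    by (intro nn_integral_cong Fubini') measurable
  finally show ?thesis .
qed

lemma nn_integral_PiM_pushforward:
  fixes h :: "'b \<Rightarrow> 'c \<Rightarrow> 'd"
  assumes sf: "sigma_finite_measure M" "sigma_finite_measure N" "sigma_finite_measure K"
    and [measurable]: "(\<lambda>(x, y). h x y) \<in> M \<Otimes>\<^sub>M N \<rightarrow>\<^sub>M K"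
    and push: "\<And>\<Psi>. \<Psi> \<in> borel_measurable K \<Longrightarrow>
      (\<integral>\<^sup>+x. (\<integral>\<^sup>+y. \<Psi> (h x y) \<partial>N) \<partial>M) = (\<integral>\<^sup>+z. \<Psi> z \<partial>K)"
    and "finite I" and "\<Psi> \<in> borel_measurable (PiM I (\<lambda>_. K))"
  shows "(\<integral>\<^sup>+X. (\<integral>\<^sup>+Y. \<Psi> (\<lambda>i\<in>I. h (X i) (Y i)) \<partial>PiM I (\<lambda>_. N)) \<partial>PiM I (\<lambda>_. M))
    = (\<integral>\<^sup>+Z. \<Psi> Z \<partial>PiM I (\<lambda>_. K))"
  using assms(6,7)
proof (induction I arbitrary: \<Psi> rule: finite_induct)
  case empty
  show ?case
    by (simp add: PiM_empty nn_integral_count_space_finite)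
next
  case (insert i I)
  interpret PK: product_sigma_finite "\<lambda>_. K"
    unfolding product_sigma_finite_def using sf by simp
  have [measurable]: "\<Psi> \<in> borel_measurable (PiM (insert i I) (\<lambda>_. K))" by fact
  let ?W = "\<lambda>X Y. \<lambda>j\<in>I. h (X j) (Y j)"
  have W_insert: "(\<lambda>j\<in>insert i I. h ((X(i := x)) j) ((Y(i := y)) j)) = (?W X Y)(i := h x y)"
    for X Y x y
    using insert(2) by (auto simp: fun_eq_iff)
  have W_space: "?W X Y \<in> space (PiM I (\<lambda>_. K))"
    if "X \<in> space (PiM I (\<lambda>_. M))" "Y \<in> space (PiM I (\<lambda>_. N))" for X Y
    using that measurable_space[OF assms(4)] by (auto simp: space_PiM space_pair_measure)
  have "(\<integral>\<^sup>+X. (\<integral>\<^sup>+Y. \<Psi> (\<lambda>j\<in>insert i I. h (X j) (Y j)) \<partial>PiM (insert i I) (\<lambda>_. N)) \<partial>PiM (insert i I) (\<lambda>_. M))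
      = (\<integral>\<^sup>+X. (\<integral>\<^sup>+Y. (\<integral>\<^sup>+x. (\<integral>\<^sup>+y. \<Psi> ((?W X Y)(i := h x y)) \<partial>N) \<partial>M) \<partial>PiM I (\<lambda>_. N)) \<partial>PiM I (\<lambda>_. M))"
    unfolding W_insert[symmetric] by (rule nn_integral_PiM_insert_pair[OF sf(1,2) insert(1,2)]) measurable
  also have "\<dots> = (\<integral>\<^sup>+X. (\<integral>\<^sup>+Y. (\<integral>\<^sup>+z. \<Psi> ((?W X Y)(i := z)) \<partial>K) \<partial>PiM I (\<lambda>_. N)) \<partial>PiM I (\<lambda>_. M))"
  proof (intro nn_integral_cong push)
    fix X Y assume "X \<in> space (PiM I (\<lambda>_. M))" "Y \<in> space (PiM I (\<lambda>_. N))"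
    then show "(\<lambda>z. \<Psi> ((?W X Y)(i := z))) \<in> borel_measurable K"
      using W_space measurable_compose[OF measurable_Pair1' measurable_add_dim] by measurable
  qed
  also have "\<dots> = (\<integral>\<^sup>+V. (\<integral>\<^sup>+z. \<Psi> (V(i := z)) \<partial>K) \<partial>PiM I (\<lambda>_. K))"
    by (rule insert.IH) measurable
  also have "\<dots> = (\<integral>\<^sup>+Z. \<Psi> Z \<partial>PiM (insert i I) (\<lambda>_. K))"
    by (rule PK.product_nn_integral_insert[OF insert(1,2), symmetric]) measurable
  finally show ?case .
qed

lemma sets_samples_eq_borel:
  "sets M = sets borel \<Longrightarrow> sets (samples n M) = sets (samples n borel)"
  unfolding samples_def by (intro sets_PiM_cong) simp_all

lemma nn_integral_samples_distr:
  assumes "prob_space M" and [measurable]: "\<phi> \<in> M \<rightarrow>\<^sub>M N"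
    and [measurable]: "F \<in> borel_measurable (samples n N)"
  shows "(\<integral>\<^sup>+X. F X \<partial>samples n (distr M N \<phi>)) = (\<integral>\<^sup>+Z. F (\<lambda>i\<in>{..<n}. \<phi> (Z i)) \<partial>samples n M)"
proof -
  let ?D = "distr M N \<phi>"
  have sets_D: "sets (samples n ?D) = sets (samples n N)"
    unfolding samples_def by (intro sets_PiM_cong) simp_all
  have \<phi>D [measurable]: "\<phi> \<in> M \<rightarrow>\<^sub>M ?D"
    using assms(2) measurable_cong_sets[OF refl sets_distr] by blast
  have samples_D: "samples n ?D = distr (samples n M) (samples n ?D) (compose {..<n} \<phi>)"
    unfolding samples_def
    by (subst distr_PiM_finite_prob_space')
       (auto intro: assms(1) prob_space.prob_space_distr intro!: PiM_cong distr_cong)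
  have compose_meas: "compose {..<n} \<phi> \<in> samples n M \<rightarrow>\<^sub>M samples n ?D"
    unfolding samples_def compose_def by measurable
  have F_meas: "F \<in> borel_measurable (samples n ?D)"
    using assms(3) measurable_cong_sets[OF sets_D refl] by blast
  show ?thesis
    by (subst samples_D, subst nn_integral_distr[OF compose_meas]) (simp_all add: F_meas compose_def)
qed

section \<open>The standard Gaussian\<close>

lemma density_lborel_translate:
  fixes g :: "'b::euclidean_space \<Rightarrow> ennreal"
  assumes [measurable]: "g \<in> borel_measurable borel"
  shows "density lborel (\<lambda>x. g (x - \<mu>)) = distr (density lborel g) borel ((+) \<mu>)"
proof -
  have "density lborel (\<lambda>x. g (x - \<mu>)) = density (distr lborel borel ((+) \<mu>)) (\<lambda>x. g (x - \<mu>))"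
    by (simp add: lborel_distr_plus)
  also have "\<dots> = distr (density lborel g) borel ((+) \<mu>)"
    by (subst density_distr) simp_all
  finally show ?thesis .
qed

lemma sets_gauss [simp, measurable_cong]: "sets (gauss \<mu>) = sets borel"
  by (simp add: gauss_def)

lemma borel_measurable_gauss_density [measurable]: "gauss_density \<mu> \<in> borel_measurable borel"
  unfolding gauss_density_def by measurable

lemma gauss_translate: "gauss \<mu> = distr (gauss 0) borel ((+) \<mu>)"
proof -
  have "gauss_density \<mu> = (\<lambda>x. gauss_density 0 (x - \<mu>))"
    by (simp add: gauss_density_def fun_eq_iff)
  then show ?thesis
    unfolding gauss_def by (simp only:) (rule density_lborel_translate, measurable)
qed

lemma normal_density_translate:
  "density lborel (normal_density \<mu> \<sigma>) = distr (density lborel (normal_density 0 \<sigma>)) borel ((+) \<mu>)"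
proof -
  have "normal_density \<mu> \<sigma> = (\<lambda>x. normal_density 0 \<sigma> (x - \<mu>))"
    by (simp add: normal_density_def fun_eq_iff)
  then show ?thesis
    by (simp only:) (rule density_lborel_translate, measurable)
qed

lemma sets_samples_gauss [measurable_cong]: "sets (samples n (gauss \<mu>)) = sets (samples n borel)"
  by (rule sets_samples_eq_borel) simp

lemma sets_samples_density_lborel [measurable_cong]:
  "sets (samples n (density lborel g)) = sets (samples n borel)"
  by (rule sets_samples_eq_borel) simp

definition vec_of_coords :: "('a::euclidean_space \<Rightarrow> real) \<Rightarrow> 'a" where
  "vec_of_coords x = (\<Sum>b\<in>Basis. x b *\<^sub>R b)"

lemma measurable_vec_of_coords [measurable]:
  assumes "sets M = sets borel"
  shows "vec_of_coords \<in> borel_measurable (PiM Basis (\<lambda>_. M))"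
proof -
  have "(\<lambda>x. x b) \<in> borel_measurable (PiM Basis (\<lambda>_. M))" if "b \<in> Basis" for b :: 'a
    using measurable_component_singleton[OF that, of "\<lambda>_. M"] measurable_cong_sets[OF refl assms]
    by auto
  then show ?thesis
    unfolding vec_of_coords_def by (intro borel_measurable_sum borel_measurable_scaleR) auto
qed

lemma inner_vec_of_coords [simp]: "b \<in> Basis \<Longrightarrow> inner b (vec_of_coords x) = x b"
  by (simp add: vec_of_coords_def inner_sum_right inner_Basis if_distrib cong: if_cong)

lemma norm_vec_of_coords_sq: "(norm (vec_of_coords x))\<^sup>2 = (\<Sum>b\<in>Basis. (x b)\<^sup>2)"
proof -
  have "(norm (vec_of_coords x))\<^sup>2 = (\<Sum>b\<in>Basis. inner (vec_of_coords x) b * inner (vec_of_coords x) b)"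
    by (simp add: power2_norm_eq_inner euclidean_inner[symmetric])
  then show ?thesis
    by (simp add: inner_commute power2_eq_square)
qed

lemma vec_of_coords_upd:
  fixes u :: "'a::euclidean_space"
  assumes "u \<in> Basis"
  shows "vec_of_coords (x(u := y)) = y *\<^sub>R u + (\<Sum>b\<in>Basis - {u}. x b *\<^sub>R b)"
  unfolding vec_of_coords_def
  by (subst sum.remove[OF finite_Basis assms]) (auto intro!: sum.cong)

lemma inner_sum_Basis_remove:
  fixes u :: "'a::euclidean_space"
  assumes "u \<in> Basis"
  shows "inner u (\<Sum>b\<in>Basis - {u}. x b *\<^sub>R b) = 0"
  unfolding inner_sum_right by (rule sum.neutral) (use assms in \<open>auto simp: inner_Basis\<close>)

lemma gauss_density_vec_of_coords:
  "gauss_density (0::'a::euclidean_space) (vec_of_coords x) = (\<Prod>b\<in>Basis. normal_density 0 1 (x b))"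
proof -
  have "(2 * pi) powr (real DIM('a) / 2) = ((2 * pi) powr (1/2)) powr real DIM('a)"
    by (simp add: powr_powr)
  also have "\<dots> = sqrt (2 * pi) ^ DIM('a)"
    by (simp add: powr_half_sqrt powr_realpow)
  finally have normalisation: "(2 * pi) powr - (real DIM('a) / 2) = (1 / sqrt (2 * pi)) ^ DIM('a)"
    by (simp add: powr_minus_divide power_one_over)
  have "(\<Prod>b\<in>Basis. normal_density 0 1 (x b))
      = (\<Prod>b\<in>(Basis::'a set). (1 / sqrt (2 * pi)) * exp (- (x b)\<^sup>2 / 2))"
    by (simp add: std_normal_density_def)
  also have "\<dots> = (1 / sqrt (2 * pi)) ^ DIM('a) * exp (\<Sum>b\<in>(Basis::'a set). - (x b)\<^sup>2 / 2)"
    by (simp only: prod.distrib prod_constant) (simp add: exp_sum)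
  also have "(\<Sum>b\<in>(Basis::'a set). - (x b)\<^sup>2 / 2) = - (norm (vec_of_coords x))\<^sup>2 / 2"
    by (simp add: norm_vec_of_coords_sq sum_negf sum_divide_distrib)
  finally show ?thesis
    by (simp add: gauss_density_def normalisation)
qed

lemma sigma_finite_std_normal: "sigma_finite_measure std_normal_distribution"
  by (simp add: prob_space_imp_sigma_finite prob_space_normal_density)

lemma gauss_0_eq_distr_PiM:
  "gauss (0::'a::euclidean_space) = distr (PiM Basis (\<lambda>_. std_normal_distribution)) borel vec_of_coords"
proof -
  have "gauss (0::'a) = density (distr (PiM Basis (\<lambda>_. lborel)) borel vec_of_coords) (gauss_density 0)"
    unfolding gauss_def vec_of_coords_def[abs_def] lborel_eq[where 'a='a] ..
  also have "\<dots> = distr (density (PiM Basis (\<lambda>_. lborel)) (\<lambda>x. gauss_density 0 (vec_of_coords x))) borel vec_of_coords"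
    by (subst density_distr) simp_all
  also have "\<dots> = distr (density (PiM Basis (\<lambda>_. lborel)) (\<lambda>x. \<Prod>b\<in>Basis. ennreal (normal_density 0 1 (x b)))) borel vec_of_coords"
    by (simp add: gauss_density_vec_of_coords prod_ennreal)
  also have "\<dots> = distr (PiM Basis (\<lambda>_. std_normal_distribution)) borel vec_of_coords"
    by (subst PiM_density) (simp_all add: sigma_finite_lborel sigma_finite_std_normal)
  finally show ?thesis .
qed

lemma prob_space_gauss: "prob_space (gauss \<mu>)"
proof -
  interpret prob_space "PiM Basis (\<lambda>_. std_normal_distribution)"
    by (intro prob_space_PiM prob_space_normal_density) simp
  have "prob_space (gauss 0)"
    unfolding gauss_0_eq_distr_PiM by (intro prob_space_distr) simp
  then show ?thesis
    by (subst gauss_translate) (auto intro: prob_space.prob_space_distr)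
qed

lemma nn_integral_samples_gauss:
  assumes "F \<in> borel_measurable (samples n borel)"
  shows "(\<integral>\<^sup>+X. F X \<partial>samples n (gauss \<mu>)) = (\<integral>\<^sup>+Z. F (\<lambda>i\<in>{..<n}. \<mu> + Z i) \<partial>samples n (gauss 0))"
  by (subst gauss_translate[of \<mu>]) (rule nn_integral_samples_distr[OF prob_space_gauss _ assms], simp)

lemma nn_integral_gauss_0_split:
  fixes u :: "'a::euclidean_space" and \<Theta> :: "'a \<Rightarrow> ennreal"
  assumes u: "u \<in> Basis" and [measurable]: "\<Theta> \<in> borel_measurable borel"
  shows "(\<integral>\<^sup>+z. \<Theta> z \<partial>gauss 0) =
    (\<integral>\<^sup>+y. (\<integral>\<^sup>+x. \<Theta> (vec_of_coords (x(u := y))) \<partial>PiM (Basis - {u}) (\<lambda>_. std_normal_distribution))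
      \<partial>std_normal_distribution)"
proof -
  interpret product_sigma_finite "\<lambda>_::'a. std_normal_distribution"
    unfolding product_sigma_finite_def by (simp add: sigma_finite_std_normal)
  have "(\<integral>\<^sup>+z. \<Theta> z \<partial>gauss 0) = (\<integral>\<^sup>+x. \<Theta> (vec_of_coords x) \<partial>PiM Basis (\<lambda>_. std_normal_distribution))"
    by (simp add: gauss_0_eq_distr_PiM nn_integral_distr)
  also have "\<dots> = (\<integral>\<^sup>+x. \<Theta> (vec_of_coords x) \<partial>PiM (insert u (Basis - {u})) (\<lambda>_. std_normal_distribution))"
    using u by (simp add: insert_absorb)
  also have "\<dots> = (\<integral>\<^sup>+y. (\<integral>\<^sup>+x. \<Theta> (vec_of_coords (x(u := y))) \<partial>PiM (Basis - {u}) (\<lambda>_. std_normal_distribution))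
      \<partial>std_normal_distribution)"
    by (rule product_nn_integral_insert_rev) (use u in \<open>simp_all add: insert_absorb\<close>)
  finally show ?thesis .
qed

lemma nn_integral_gauss_resample_coord:
  fixes u :: "'a::euclidean_space" and \<psi> :: "'a \<Rightarrow> ennreal"
  assumes u: "u \<in> Basis" and [measurable]: "\<psi> \<in> borel_measurable borel"
  shows "(\<integral>\<^sup>+s. (\<integral>\<^sup>+z. \<psi> (s *\<^sub>R u + (z - inner u z *\<^sub>R u)) \<partial>gauss 0) \<partial>std_normal_distribution)
    = (\<integral>\<^sup>+z. \<psi> z \<partial>gauss 0)"
proof -
  interpret N: prob_space std_normal_distribution
    by (simp add: prob_space_normal_density)
  have "emeasure std_normal_distribution UNIV = 1"
    using N.emeasure_space_1 by simp
  have resample: "s *\<^sub>R u + (vec_of_coords (x(u := y)) - inner u (vec_of_coords (x(u := y))) *\<^sub>R u)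
      = vec_of_coords (x(u := s))" for s y x
    using u by (simp add: vec_of_coords_upd inner_sum_Basis_remove inner_add_right)
  have "(\<integral>\<^sup>+z. \<psi> (s *\<^sub>R u + (z - inner u z *\<^sub>R u)) \<partial>gauss 0)
     = (\<integral>\<^sup>+x. \<psi> (vec_of_coords (x(u := s))) \<partial>PiM (Basis - {u}) (\<lambda>_. std_normal_distribution))" for s
    by (subst nn_integral_gauss_0_split[OF u]) (measurable, simp add: resample \<open>emeasure std_normal_distribution UNIV = 1\<close>)
  then show ?thesis
    by (simp add: nn_integral_gauss_0_split[OF u])
qed

lemma nn_integral_samples_gauss_resample_coord:
  fixes u :: "'a::euclidean_space"
  assumes u: "u \<in> Basis" and \<Psi>: "\<Psi> \<in> borel_measurable (samples n borel)"
  shows "(\<integral>\<^sup>+S. (\<integral>\<^sup>+Z. \<Psi> (\<lambda>i\<in>{..<n}. S i *\<^sub>R u + (Z i - inner u (Z i) *\<^sub>R u)) \<partial>samples n (gauss 0))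
      \<partial>samples n std_normal_distribution)
    = (\<integral>\<^sup>+W. \<Psi> W \<partial>samples n (gauss 0))"
  unfolding samples_def
proof (rule nn_integral_PiM_pushforward)
  have [measurable_cong]: "sets std_normal_distribution = sets borel"
    by simp
  have gauss_borel: "borel_measurable (gauss 0) = borel_measurable (borel :: 'a measure)"
    by (rule measurable_cong_sets) simp_all
  show "sigma_finite_measure std_normal_distribution"
    by (rule sigma_finite_std_normal)
  show "sigma_finite_measure (gauss (0::'a))"
    by (intro prob_space_imp_sigma_finite prob_space_gauss)
  then show "sigma_finite_measure (gauss (0::'a))" .
  show "(\<lambda>(s, z). s *\<^sub>R u + (z - inner u z *\<^sub>R u)) \<in> std_normal_distribution \<Otimes>\<^sub>M gauss 0 \<rightarrow>\<^sub>M gauss 0"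
    by measurable
  show "(\<integral>\<^sup>+s. (\<integral>\<^sup>+z. \<Phi> (s *\<^sub>R u + (z - inner u z *\<^sub>R u)) \<partial>gauss 0) \<partial>std_normal_distribution)
      = (\<integral>\<^sup>+z. \<Phi> z \<partial>gauss 0)" if "\<Phi> \<in> borel_measurable (gauss 0)" for \<Phi>
    using that by (intro nn_integral_gauss_resample_coord u) (simp add: gauss_borel)
  have "sets (PiM {..<n} (\<lambda>_. gauss (0::'a))) = sets (PiM {..<n} (\<lambda>_. borel))"
    by (intro sets_PiM_cong) simp_all
  then show "\<Psi> \<in> borel_measurable (PiM {..<n} (\<lambda>_. gauss 0))"
    using \<Psi> measurable_cong_sets unfolding samples_def by blast
qed simp

section \<open>Second moments and averaging\<close>

lemma (in prob_space) integrable_of_nn_integral_square_diff_finite: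
  fixes h :: "'a \<Rightarrow> real"
  assumes [measurable]: "h \<in> borel_measurable M"
    and finite: "(\<integral>\<^sup>+x. ennreal ((h x - c)\<^sup>2) \<partial>M) \<noteq> \<infinity>"
  shows "integrable M (\<lambda>x. (h x - c)\<^sup>2)" and "integrable M h"
proof -
  have bound: "(\<integral>\<^sup>+x. ennreal (norm ((h x - c)\<^sup>2)) \<partial>M) < \<infinity>"
    using finite by (simp add: less_top)
  show square: "integrable M (\<lambda>x. (h x - c)\<^sup>2)"
    by (rule integrableI_bounded) (measurable, rule bound)
  have "integrable M (\<lambda>x. h x - c)"
    by (rule square_integrable_imp_integrable) (measurable, simp add: square)
  then have "integrable M (\<lambda>x. (h x - c) + c)"
    by (intro Bochner_Integration.integrable_add) auto
  then show "integrable M h"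
    by simp
qed

lemma (in prob_space) square_expectation_diff_le:
  fixes h :: "'a \<Rightarrow> real"
  assumes [measurable]: "h \<in> borel_measurable M"
  shows "ennreal ((expectation h - c)\<^sup>2) \<le> (\<integral>\<^sup>+x. ennreal ((h x - c)\<^sup>2) \<partial>M)"
proof (cases "(\<integral>\<^sup>+x. ennreal ((h x - c)\<^sup>2) \<partial>M) = \<infinity>")
  case False
  note integrable = integrable_of_nn_integral_square_diff_finite[OF assms False]
  have "expectation (\<lambda>x. h x - c) = expectation h - c"
    using integrable(2) by (simp add: prob_space)
  moreover have "(expectation (\<lambda>x. h x - c))\<^sup>2 \<le> expectation (\<lambda>x. (h x - c)\<^sup>2)"
    using integrable by (intro jensens_inequality[where I = UNIV] convex_power2) simp_all
  moreover have "(\<integral>\<^sup>+x. ennreal ((h x - c)\<^sup>2) \<partial>M) = ennreal (expectation (\<lambda>x. (h x - c)\<^sup>2))"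
    using integrable(1) by (intro nn_integral_eq_integral) simp_all
  ultimately show ?thesis
    by (simp add: ennreal_leI)
qed simp

lemma (in prob_space) ex_le_of_nn_integral_le:
  assumes [measurable]: "H \<in> borel_measurable M" and le: "(\<integral>\<^sup>+x. H x \<partial>M) \<le> c"
  shows "\<exists>x\<in>space M. H x \<le> c"
proof (rule ccontr)
  assume "\<not> ?thesis"
  then have less: "c < H x" if "x \<in> space M" for x
    using that by (auto simp: not_le)
  obtain x where "x \<in> space M"
    using not_empty by blast
  then have "c \<noteq> \<infinity>"
    using less[of x] by auto
  have "(\<integral>\<^sup>+x. c \<partial>M) < (\<integral>\<^sup>+x. H x \<partial>M)"
  proof (rule nn_integral_less)
    show "\<not> (AE x in M. H x \<le> c)"
    proof
      assume "AE x in M. H x \<le> c"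
      then have "AE x in M. False"
        using AE_space by eventually_elim (metis less leD)
      then show False
        by simp
    qed
    show "(\<integral>\<^sup>+x. c \<partial>M) \<noteq> \<infinity>"
      using \<open>c \<noteq> \<infinity>\<close> by (simp add: emeasure_space_1)
    show "AE x in M. c \<le> H x"
      using less by (auto intro: less_imp_le)
  qed simp_all
  then show False
    using le by (simp add: emeasure_space_1)
qed

lemma ex_le_of_sum_le:
  fixes X :: "'i \<Rightarrow> ennreal"
  assumes "finite I" and "I \<noteq> {}" and sum_le: "(\<Sum>i\<in>I. X i) \<le> of_nat (card I) * c"
  shows "\<exists>i\<in>I. X i \<le> c"
proof -
  obtain i where i: "i \<in> I" and min: "\<And>j. j \<in> I \<Longrightarrow> X i \<le> X j"
  proof -
    have "Min (X ` I) \<in> X ` I"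
      using assms(1,2) by simp
    then obtain i where "i \<in> I" and "X i = Min (X ` I)"
      by auto
    moreover have "Min (X ` I) \<le> X j" if "j \<in> I" for j
      using assms(1) that by simp
    ultimately show thesis
      using that by metis
  qed
  have "of_nat (card I) * X i = (\<Sum>j\<in>I. X i)"
    by simp
  also have "\<dots> \<le> (\<Sum>j\<in>I. X j)"
    using min by (intro sum_mono)
  finally have "of_nat (card I) * X i \<le> of_nat (card I) * c"
    using sum_le by (rule order_trans)
  then have "X i \<le> c"
    using assms(1,2) by (subst (asm) ennreal_mult_le_mult_iff) auto
  then show ?thesis
    using i by blast
qed

lemma ex_slice_nn_integral_le:
  assumes "prob_space P" and "finite J" and "u \<notin> J"
    and [measurable]: "H \<in> borel_measurable (PiM (insert u J) (\<lambda>_. P))"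
    and le: "(\<integral>\<^sup>+m. H m \<partial>PiM (insert u J) (\<lambda>_. P)) \<le> c"
  shows "\<exists>m. (\<integral>\<^sup>+y. H (m(u := y)) \<partial>P) \<le> c"
proof -
  interpret P: prob_space P
    by (rule assms(1))
  interpret product_sigma_finite "\<lambda>_. P"
    unfolding product_sigma_finite_def by (simp add: P.sigma_finite_measure_axioms)
  interpret slices: prob_space "PiM J (\<lambda>_. P)"
    by (intro prob_space_PiM assms(1))
  have "(\<integral>\<^sup>+m. H m \<partial>PiM (insert u J) (\<lambda>_. P))
      = (\<integral>\<^sup>+m. (\<integral>\<^sup>+y. H (m(u := y)) \<partial>P) \<partial>PiM J (\<lambda>_. P))"
    by (rule product_nn_integral_insert[OF assms(2-4)])
  with le have "(\<integral>\<^sup>+m. (\<integral>\<^sup>+y. H (m(u := y)) \<partial>P) \<partial>PiM J (\<lambda>_. P)) \<le> c"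
    by simp
  moreover have "(\<lambda>m. \<integral>\<^sup>+y. H (m(u := y)) \<partial>P) \<in> borel_measurable (PiM J (\<lambda>_. P))"
    using measurable_compose[OF measurable_add_dim assms(4)]
    by (intro P.borel_measurable_nn_integral) (simp add: case_prod_beta')
  ultimately show ?thesis
    using slices.ex_le_of_nn_integral_le by blast
qed

section \<open>Coordinatewise Bayes risk\<close>

definition coord_risk :: "((nat \<Rightarrow> 'a::euclidean_space) \<Rightarrow> 'a) \<Rightarrow> nat \<Rightarrow> 'a \<Rightarrow> 'a \<Rightarrow> ennreal" where
  "coord_risk f n b \<mu> = (\<integral>\<^sup>+X. ennreal ((inner b (f X - \<mu>))\<^sup>2) \<partial>samples n (gauss \<mu>))"

lemma coord_risk_translate:
  assumes [measurable]: "f \<in> borel_measurable (samples n borel)"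
  shows "coord_risk f n b \<mu> =
    (\<integral>\<^sup>+Z. ennreal ((inner b (f (\<lambda>i\<in>{..<n}. \<mu> + Z i) - \<mu>))\<^sup>2) \<partial>samples n (gauss 0))"
  unfolding coord_risk_def by (rule nn_integral_samples_gauss) measurable

lemma borel_measurable_coord_risk [measurable]:
  assumes [measurable]: "f \<in> borel_measurable (samples n borel)"
  shows "coord_risk f n b \<in> borel_measurable borel"
proof -
  interpret sigma_finite_measure "PiM {..<n} (\<lambda>_. gauss (0::'a))"
    by (intro prob_space_imp_sigma_finite prob_space_PiM prob_space_gauss)
  have [measurable]: "f \<in> borel_measurable (PiM {..<n} (\<lambda>_. gauss 0))"
    using assms by (simp flip: samples_def)
  show ?thesis
    unfolding coord_risk_translate[OF assms, abs_def] samples_def by measurable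
qed

lemma mse_eq_sum_coord_risk:
  assumes [measurable]: "f \<in> borel_measurable (samples n borel)"
  shows "(\<integral>\<^sup>+X. ennreal ((norm (f X - \<mu>))\<^sup>2) \<partial>samples n (gauss \<mu>)) = (\<Sum>b\<in>Basis. coord_risk f n b \<mu>)"
proof -
  have norm_sq: "(norm v)\<^sup>2 = (\<Sum>b\<in>Basis. (inner b v)\<^sup>2)" for v :: 'a
  proof -
    have "(norm v)\<^sup>2 = (\<Sum>b\<in>Basis. inner v b * inner v b)"
      by (simp add: power2_norm_eq_inner euclidean_inner[symmetric])
    then show ?thesis
      by (simp add: inner_commute power2_eq_square)
  qed
  show ?thesis
    unfolding coord_risk_def
    by (subst nn_integral_sum[symmetric]) (measurable, simp add: norm_sq sum_ennreal)
qed

lemma bayes_sum_coord_risk_le: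
  fixes f :: "(nat \<Rightarrow> 'a::euclidean_space) \<Rightarrow> 'a" and P :: "real measure"
  assumes [measurable]: "f \<in> borel_measurable (samples n borel)"
    and "unif_MSE_accurate f n C" and "prob_space P" and "sets P = sets borel"
  shows "(\<Sum>b\<in>Basis. \<integral>\<^sup>+m. coord_risk f n b (vec_of_coords m) \<partial>PiM Basis (\<lambda>_. P))
    \<le> of_nat DIM('a) * ennreal (C / real n)"
proof -
  interpret prior: prob_space "PiM Basis (\<lambda>_. P)"
    by (intro prob_space_PiM assms(3))
  have [measurable]: "vec_of_coords \<in> borel_measurable (PiM Basis (\<lambda>_. P))"
    using assms(4) by (rule measurable_vec_of_coords)
  have mse: "(\<Sum>b\<in>Basis. coord_risk f n b \<mu>) \<le> ennreal (C * real DIM('a) / real n)" for \<mu> :: 'a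
    using assms(2) unfolding unif_MSE_accurate_def mse_eq_sum_coord_risk[OF assms(1), symmetric]
    by (simp add: SUP_le_iff)
  have "(\<Sum>b\<in>Basis. \<integral>\<^sup>+m. coord_risk f n b (vec_of_coords m) \<partial>PiM Basis (\<lambda>_. P))
      = (\<integral>\<^sup>+m. (\<Sum>b\<in>Basis. coord_risk f n b (vec_of_coords m)) \<partial>PiM Basis (\<lambda>_. P))"
    by (rule nn_integral_sum[symmetric]) measurable
  also have "\<dots> \<le> (\<integral>\<^sup>+m. ennreal (C * real DIM('a) / real n) \<partial>PiM (Basis :: 'a set) (\<lambda>_. P))"
    by (rule nn_integral_mono) (rule mse)
  also have "\<dots> = ennreal (real DIM('a) * (C / real n))"
    by (simp add: prior.emeasure_space_1 mult.commute)
  also have "\<dots> = of_nat DIM('a) * ennreal (C / real n)"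
    by (subst ennreal_mult') (simp_all add: ennreal_of_nat_eq_real_of_nat)
  finally show ?thesis .
qed

lemma exists_coord_bayes_risk_le:
  fixes f :: "(nat \<Rightarrow> 'a::euclidean_space) \<Rightarrow> 'a" and P :: "real measure"
  assumes [measurable]: "f \<in> borel_measurable (samples n borel)"
    and "unif_MSE_accurate f n C" and "prob_space P" and "sets P = sets borel"
  shows "\<exists>u\<in>Basis. \<exists>lam. inner u lam = 0 \<and>
    (\<integral>\<^sup>+y. coord_risk f n u (y *\<^sub>R u + lam) \<partial>P) \<le> ennreal (C / real n)"
proof -
  have [measurable]: "vec_of_coords \<in> borel_measurable (PiM Basis (\<lambda>_. P))"
    using assms(4) by (rule measurable_vec_of_coords)
  obtain u :: 'a where u: "u \<in> Basis"
    and risk_u: "(\<integral>\<^sup>+m. coord_risk f n u (vec_of_coords m) \<partial>PiM Basis (\<lambda>_. P)) \<le> ennreal (C / real n)"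
    using ex_le_of_sum_le[OF finite_Basis _ bayes_sum_coord_risk_le[OF assms]] by auto
  have Basis_eq: "insert u (Basis - {u}) = Basis"
    using u by auto
  have "(\<lambda>m. coord_risk f n u (vec_of_coords m)) \<in> borel_measurable (PiM Basis (\<lambda>_. P))"
    by measurable
  then obtain m where m: "(\<integral>\<^sup>+y. coord_risk f n u (vec_of_coords (m(u := y))) \<partial>P) \<le> ennreal (C / real n)"
    using ex_slice_nn_integral_le[OF assms(3), of "Basis - {u}" u "\<lambda>m. coord_risk f n u (vec_of_coords m)"]
      risk_u
    unfolding Basis_eq by auto
  define lam where "lam = (\<Sum>b\<in>Basis - {u}. m b *\<^sub>R b)"
  have "vec_of_coords (m(u := y)) = y *\<^sub>R u + lam" for y
    unfolding lam_def by (rule vec_of_coords_upd[OF u])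
  moreover have "inner u lam = 0"
    unfolding lam_def by (rule inner_sum_Basis_remove[OF u])
  ultimately show ?thesis
    using u m by auto
qed

section \<open>The scalar estimator\<close>

lemma borel_measurable_g_integrand [measurable]:
  fixes f :: "(nat \<Rightarrow> 'a::euclidean_space) \<Rightarrow> 'a"
  assumes "f \<in> borel_measurable (samples n borel)"
  shows "g_integrand f n u lam T \<in> borel_measurable (samples n borel)"
    and "case_prod (g_integrand f n u lam) \<in> borel_measurable (samples n borel \<Otimes>\<^sub>M samples n borel)"
proof -
  have [measurable]: "f \<in> borel_measurable (PiM {..<n} (\<lambda>_. borel))"
    using assms by (simp add: samples_def)
  show "g_integrand f n u lam T \<in> borel_measurable (samples n borel)"
    and "case_prod (g_integrand f n u lam) \<in> borel_measurable (samples n borel \<Otimes>\<^sub>M samples n borel)"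
    unfolding g_integrand_def samples_def by measurable
qed

lemma nn_integral_g_integrand_risk:
  fixes f :: "(nat \<Rightarrow> 'a::euclidean_space) \<Rightarrow> 'a"
  assumes [measurable]: "f \<in> borel_measurable (samples n borel)"
    and u: "u \<in> Basis" and lam: "inner u lam = 0"
  shows "(\<integral>\<^sup>+T. (\<integral>\<^sup>+Z. ennreal ((g_integrand f n u lam T Z - y)\<^sup>2) \<partial>samples n (gauss 0))
      \<partial>samples n (density lborel (normal_density y 1))) = coord_risk f n u (y *\<^sub>R u + lam)"
proof -
  let ?G = "samples n (gauss (0::'a))" and ?N = "samples n std_normal_distribution"
  define \<mu> where "\<mu> = y *\<^sub>R u + lam"
  define \<Psi> where "\<Psi> W = ennreal ((inner u (f (\<lambda>i\<in>{..<n}. \<mu> + W i) - \<mu>))\<^sup>2)" for W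
  interpret G: sigma_finite_measure ?G
    unfolding samples_def by (intro prob_space_imp_sigma_finite prob_space_PiM prob_space_gauss)
  have inner_\<mu>: "inner u \<mu> = y"
    using u lam by (simp add: \<mu>_def inner_add_right)
  have "(\<integral>\<^sup>+T. (\<integral>\<^sup>+Z. ennreal ((g_integrand f n u lam T Z - y)\<^sup>2) \<partial>?G)
      \<partial>samples n (density lborel (normal_density y 1)))
    = (\<integral>\<^sup>+S. (\<integral>\<^sup>+Z. ennreal ((g_integrand f n u lam (\<lambda>i\<in>{..<n}. y + S i) Z - y)\<^sup>2) \<partial>?G) \<partial>?N)"
    by (subst normal_density_translate, intro nn_integral_samples_distr)
       (simp_all add: prob_space_normal_density)
  also have "\<dots> = (\<integral>\<^sup>+S. (\<integral>\<^sup>+Z. \<Psi> (\<lambda>i\<in>{..<n}. S i *\<^sub>R u + (Z i - inner u (Z i) *\<^sub>R u)) \<partial>?G) \<partial>?N)"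
  proof (intro nn_integral_cong)
    fix S Z :: "nat \<Rightarrow> _"
    have "(\<lambda>i\<in>{..<n}. (\<lambda>i\<in>{..<n}. y + S i) i *\<^sub>R u + (lam + (Z i - inner u (Z i) *\<^sub>R u)))
        = (\<lambda>i\<in>{..<n}. \<mu> + (\<lambda>i\<in>{..<n}. S i *\<^sub>R u + (Z i - inner u (Z i) *\<^sub>R u)) i)"
      by (auto simp: \<mu>_def fun_eq_iff algebra_simps)
    then show "ennreal ((g_integrand f n u lam (\<lambda>i\<in>{..<n}. y + S i) Z - y)\<^sup>2)
        = \<Psi> (\<lambda>i\<in>{..<n}. S i *\<^sub>R u + (Z i - inner u (Z i) *\<^sub>R u))"
      unfolding g_integrand_def \<Psi>_def by (simp add: inner_diff_right inner_\<mu>)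
  qed
  also have "\<dots> = (\<integral>\<^sup>+W. \<Psi> W \<partial>?G)"
  proof (rule nn_integral_samples_gauss_resample_coord[OF u])
    have [measurable]: "f \<in> borel_measurable (PiM {..<n} (\<lambda>_. borel))"
      using assms(1) by (simp add: samples_def)
    show "\<Psi> \<in> borel_measurable (samples n borel)"
      unfolding \<Psi>_def samples_def by measurable
  qed
  also have "\<dots> = coord_risk f n u (y *\<^sub>R u + lam)"
    by (simp add: coord_risk_translate \<Psi>_def \<mu>_def)
  finally show ?thesis .
qed

lemma nn_integral_g_est_risk_le:
  fixes f :: "(nat \<Rightarrow> 'a::euclidean_space) \<Rightarrow> 'a"
  assumes [measurable]: "f \<in> borel_measurable (samples n borel)"
    and "u \<in> Basis" and "inner u lam = 0"
  shows "(\<integral>\<^sup>+T. ennreal ((g_est f n u lam T - y)\<^sup>2) \<partial>samples n (density lborel (normal_density y 1)))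
    \<le> coord_risk f n u (y *\<^sub>R u + lam)"
proof -
  interpret G: prob_space "samples n (gauss (0::'a))"
    unfolding samples_def by (intro prob_space_PiM prob_space_gauss)
  have "ennreal ((g_est f n u lam T - y)\<^sup>2)
      \<le> (\<integral>\<^sup>+Z. ennreal ((g_integrand f n u lam T Z - y)\<^sup>2) \<partial>samples n (gauss 0))" for T
    unfolding g_est_def by (rule G.square_expectation_diff_le) measurable
  then have "(\<integral>\<^sup>+T. ennreal ((g_est f n u lam T - y)\<^sup>2) \<partial>samples n (density lborel (normal_density y 1)))
      \<le> (\<integral>\<^sup>+T. (\<integral>\<^sup>+Z. ennreal ((g_integrand f n u lam T Z - y)\<^sup>2) \<partial>samples n (gauss 0))
          \<partial>samples n (density lborel (normal_density y 1)))"
    by (rule nn_integral_mono)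
  also have "\<dots> = coord_risk f n u (y *\<^sub>R u + lam)"
    by (rule nn_integral_g_integrand_risk[OF assms])
  finally show ?thesis .
qed

lemma AE_integrable_g_integrand:
  fixes f :: "(nat \<Rightarrow> 'a::euclidean_space) \<Rightarrow> 'a"
  assumes [measurable]: "f \<in> borel_measurable (samples n borel)"
    and "u \<in> Basis" and "inner u lam = 0" and finite: "coord_risk f n u (y *\<^sub>R u + lam) \<noteq> \<infinity>"
  shows "AE T in samples n (density lborel (normal_density y 1)).
    integrable (samples n (gauss 0)) (g_integrand f n u lam T)"
proof -
  interpret G: prob_space "samples n (gauss (0::'a))"
    unfolding samples_def by (intro prob_space_PiM prob_space_gauss)
  have "AE T in samples n (density lborel (normal_density y 1)).
      (\<integral>\<^sup>+Z. ennreal ((g_integrand f n u lam T Z - y)\<^sup>2) \<partial>samples n (gauss 0)) \<noteq> \<infinity>"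
    using finite
    by (intro nn_integral_PInf_AE) (measurable, simp add: nn_integral_g_integrand_risk[OF assms(1-3)])
  then show ?thesis
    by (rule eventually_mono) (rule G.integrable_of_nn_integral_square_diff_finite(2), measurable)
qed

theorem lemmaE2:
  fixes f :: "(nat \<Rightarrow> 'a::euclidean_space) \<Rightarrow> 'a"
    and n :: nat and C \<rho> :: real
  assumes "n > 0"
    and "f \<in> borel_measurable (samples n (borel :: 'a measure))"
    and "unif_MSE_accurate f n C"
    and "\<rho> > 0"
  shows "\<exists>u lam. norm u = 1 \<and> inner u lam = 0 \<and>
    (AE \<mu>' in density lborel (normal_density 0 \<rho>).
       AE T in samples n (density lborel (normal_density \<mu>' 1)).
         integrable (samples n (gauss 0)) (g_integrand f n u lam T)) \<and>
    (\<integral>\<^sup>+ \<mu>'. (\<integral>\<^sup>+ T. ennreal ((g_est f n u lam T - \<mu>')\<^sup>2)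
        \<partial>samples n (density lborel (normal_density \<mu>' 1)))
      \<partial>density lborel (normal_density 0 \<rho>)) \<le> ennreal (C / real n)"
proof -
  let ?prior = "density lborel (normal_density 0 \<rho>)"
  obtain u lam where u: "u \<in> Basis" and lam: "inner u lam = 0"
    and bayes: "(\<integral>\<^sup>+y. coord_risk f n u (y *\<^sub>R u + lam) \<partial>?prior) \<le> ennreal (C / real n)"
    using exists_coord_bayes_risk_le[OF assms(2,3) prob_space_normal_density[OF assms(4), where \<mu> = 0]]
    by auto
  have "AE y in ?prior. coord_risk f n u (y *\<^sub>R u + lam) \<noteq> \<infinity>"
    using bayes assms(2) by (intro nn_integral_PInf_AE) (measurable, auto simp: top_unique)
  then have "AE y in ?prior. AE T in samples n (density lborel (normal_density y 1)).
      integrable (samples n (gauss 0)) (g_integrand f n u lam T)"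
    by (rule eventually_mono) (rule AE_integrable_g_integrand[OF assms(2) u lam])
  moreover have "(\<integral>\<^sup>+y. (\<integral>\<^sup>+T. ennreal ((g_est f n u lam T - y)\<^sup>2)
      \<partial>samples n (density lborel (normal_density y 1))) \<partial>?prior) \<le> ennreal (C / real n)"
    using nn_integral_mono[OF nn_integral_g_est_risk_le[OF assms(2) u lam]] bayes by (rule order_trans)
  ultimately show ?thesis
    using u lam by (intro exI[of _ u] exI[of _ lam]) auto
qed

end
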